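(* Let $A\subseteq B$ be an admissible extension (under the standing assumptions below). Then for every $\psi\in\mathrm{Spec}(A)$ there exists $\mu\in\mathrm{Min}(B)$ such that $\mu\cap\nabla_A\subseteq\psi$.
   Context: For an algebra $M$ of a fixed signature: $\mathrm{Con}(M)$ is its congruence lattice with bottom $\Delta_M$ and top $\nabla_M=M^2$. $[\cdot,\cdot]_M$ is the term condition commutator: for $\alpha,\beta,\mu\in\mathrm{Con}(M)$, $C(\alpha,\beta;\mu)$ means that for all $n,k$, every $(n+k)$-ary term $t$, all $(a_i,b_i)\in\alpha$ and $(c_j,d_j)\in\beta$: $(t(\bar a,\bar c),t(\bar a,\bar d))\in\mu$ iff $(t(\bar b,\bar c),t(\bar b,\bar d))\in\mu$; $[\alpha,\beta]_M=\bigcap\{\mu: C(\alpha,\beta;\mu)\}$. A congruence $\phi\neq\nabla_M$ is prime if $[\alpha,\beta]_M\subseteq\phi$ implies $\alpha\subseteq\phi$ or $\beta\subseteq\phi$; $\mathrm{Spec}(M)$ is the set of primes, $\mathrm{Min}(M)$ its minimal elements; $\rho_M(\theta)$ is the intersection of all primes containing $\theta$ ($\nabla_M$ if none); $M$ is semiprime if $\rho_M(\Delta_M)=\Delta_M$. Standing assumptions: $B$ is an algebra, $A$ is a subalgebra of $B$, $A$ and $B$ are semiprime, and the commutators of $A$ and $B$ are commutative and distributive w.r.t. arbitrary joins (i.e. $[\alpha,\beta]=[\beta,\alpha]$ and $[\bigvee_i\alpha_i,\beta]=\bigvee_i[\alpha_i,\beta]$). The extension $A\subseteq B$ is admissible iff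 $\phi\cap\nabla_A\in\mathrm{Spec}(A)$ for all $\phi\in\mathrm{Spec}(B)$. *)

theory Defs
  imports Main
begin

record ('f, 'a) ualg =
  ucarrier :: "'a set"
  uops :: "'f \<Rightarrow> 'a list \<Rightarrow> 'a"

definition is_alg :: "('f \<Rightarrow> nat) \<Rightarrow> ('f, 'a) ualg \<Rightarrow> bool" where
  "is_alg ar M \<longleftrightarrow> (\<forall>f xs. length xs = ar f \<and> set xs \<subseteq> ucarrier M
      \<longrightarrow> uops M f xs \<in> ucarrier M)"

definition is_subalg :: "('f \<Rightarrow> nat) \<Rightarrow> ('f, 'a) ualg \<Rightarrow> ('f, 'a) ualg \<Rightarrow> bool" where
  "is_subalg ar A B \<longleftrightarrow> is_alg ar A \<and> is_alg ar B \<and> ucarrier A \<subseteq> ucarrier B \<and>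
     (\<forall>f xs. length xs = ar f \<and> set xs \<subseteq> ucarrier A \<longrightarrow> uops A f xs = uops B f xs)"

datatype ('f, 'v) trm = V 'v | F 'f "('f, 'v) trm list"

primrec wf_trm :: "('f \<Rightarrow> nat) \<Rightarrow> ('f, 'v) trm \<Rightarrow> bool" where
  "wf_trm ar (V x) = True"
| "wf_trm ar (F f ts) = (length ts = ar f \<and> list_all (wf_trm ar) ts)"

primrec tvars :: "('f, 'v) trm \<Rightarrow> 'v set" where
  "tvars (V x) = {x}"
| "tvars (F f ts) = \<Union>(set (map tvars ts))"

primrec teval :: "('f, 'a) ualg \<Rightarrow> ('v \<Rightarrow> 'a) \<Rightarrow> ('f, 'v) trm \<Rightarrow> 'a" where
  "teval M env (V x) = env x"
| "teval M env (F f ts) = uops M f (map (teval M env) ts)"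

definition nabla :: "('f, 'a) ualg \<Rightarrow> 'a rel" where
  "nabla M = ucarrier M \<times> ucarrier M"

definition delta :: "('f, 'a) ualg \<Rightarrow> 'a rel" where
  "delta M = Id_on (ucarrier M)"

definition Con :: "('f \<Rightarrow> nat) \<Rightarrow> ('f, 'a) ualg \<Rightarrow> 'a rel set" where
  "Con ar M = {\<theta>. equiv (ucarrier M) \<theta> \<and>
     (\<forall>f xs ys. length xs = ar f \<and> length ys = ar f \<and>
        (\<forall>i<ar f. (xs ! i, ys ! i) \<in> \<theta>) \<longrightarrow> (uops M f xs, uops M f ys) \<in> \<theta>)}"

text \<open>Term condition C(alpha, beta; mu). Variables Inl i (i < n) stand for the
  tuple a / b, variables Inr j (j < k) for the tuple c / d.\<close>

definition TC :: "('f \<Rightarrow> nat) \<Rightarrow> ('f, 'a) ualg \<Rightarrow> 'a rel \<Rightarrow> 'a rel \<Rightarrow> 'a rel \<Rightarrow> bool" where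
  "TC ar M \<alpha> \<beta> \<mu> \<longleftrightarrow>
    (\<forall>(n::nat) (k::nat) (t::('f, nat + nat) trm) a b c d.
       wf_trm ar t \<and> tvars t \<subseteq> Inl ` {..<n} \<union> Inr ` {..<k} \<and>
       (\<forall>i<n. (a i, b i) \<in> \<alpha>) \<and> (\<forall>j<k. (c j, d j) \<in> \<beta>) \<longrightarrow>
       ((teval M (case_sum a c) t, teval M (case_sum a d) t) \<in> \<mu> \<longleftrightarrow>
        (teval M (case_sum b c) t, teval M (case_sum b d) t) \<in> \<mu>))"

definition comm :: "('f \<Rightarrow> nat) \<Rightarrow> ('f, 'a) ualg \<Rightarrow> 'a rel \<Rightarrow> 'a rel \<Rightarrow> 'a rel" where
  "comm ar M \<alpha> \<beta> = \<Inter>{\<mu> \<in> Con ar M. TC ar M \<alpha> \<beta> \<mu>}"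

definition cjoin :: "('f \<Rightarrow> nat) \<Rightarrow> ('f, 'a) ualg \<Rightarrow> 'a rel set \<Rightarrow> 'a rel" where
  "cjoin ar M S = \<Inter>{\<theta> \<in> Con ar M. \<Union>S \<subseteq> \<theta>}"

definition prime_con :: "('f \<Rightarrow> nat) \<Rightarrow> ('f, 'a) ualg \<Rightarrow> 'a rel \<Rightarrow> bool" where
  "prime_con ar M \<phi> \<longleftrightarrow> \<phi> \<in> Con ar M \<and> \<phi> \<noteq> nabla M \<and>
     (\<forall>\<alpha>\<in>Con ar M. \<forall>\<beta>\<in>Con ar M. comm ar M \<alpha> \<beta> \<subseteq> \<phi> \<longrightarrow> \<alpha> \<subseteq> \<phi> \<or> \<beta> \<subseteq> \<phi>)"

definition Spec :: "('f \<Rightarrow> nat) \<Rightarrow> ('f, 'a) ualg \<Rightarrow> 'a rel set" where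
  "Spec ar M = {\<phi>. prime_con ar M \<phi>}"

definition MinSpec :: "('f \<Rightarrow> nat) \<Rightarrow> ('f, 'a) ualg \<Rightarrow> 'a rel set" where
  "MinSpec ar M = {\<phi> \<in> Spec ar M. \<forall>\<psi>\<in>Spec ar M. \<psi> \<subseteq> \<phi> \<longrightarrow> \<psi> = \<phi>}"

text \<open>rho(theta): intersection of the primes containing theta; nabla if there are none.\<close>
definition rho :: "('f \<Rightarrow> nat) \<Rightarrow> ('f, 'a) ualg \<Rightarrow> 'a rel \<Rightarrow> 'a rel" where
  "rho ar M \<theta> = nabla M \<inter> \<Inter>{\<phi> \<in> Spec ar M. \<theta> \<subseteq> \<phi>}"

definition semiprime :: "('f \<Rightarrow> nat) \<Rightarrow> ('f, 'a) ualg \<Rightarrow> bool" where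
  "semiprime ar M \<longleftrightarrow> rho ar M (delta M) = delta M"

definition comm_commutative :: "('f \<Rightarrow> nat) \<Rightarrow> ('f, 'a) ualg \<Rightarrow> bool" where
  "comm_commutative ar M \<longleftrightarrow>
     (\<forall>\<alpha>\<in>Con ar M. \<forall>\<beta>\<in>Con ar M. comm ar M \<alpha> \<beta> = comm ar M \<beta> \<alpha>)"

definition comm_join_distributive :: "('f \<Rightarrow> nat) \<Rightarrow> ('f, 'a) ualg \<Rightarrow> bool" where
  "comm_join_distributive ar M \<longleftrightarrow>
     (\<forall>S \<subseteq> Con ar M. \<forall>\<beta>\<in>Con ar M.
        comm ar M (cjoin ar M S) \<beta> = cjoin ar M ((\<lambda>\<alpha>. comm ar M \<alpha> \<beta>) ` S))"

definition admissible :: "('f \<Rightarrow> nat) \<Rightarrow> ('f, 'a) ualg \<Rightarrow> ('f, 'a) ualg \<Rightarrow> bool" where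
  "admissible ar A B \<longleftrightarrow> (\<forall>\<phi>\<in>Spec ar B. \<phi> \<inter> nabla A \<in> Spec ar A)"

end

theory Submission
  imports Defs
begin

text \<open>Given a prime \<open>\<psi>\<close> of \<open>A\<close>, Zorn's lemma yields a congruence \<open>\<theta>\<close> of \<open>B\<close>
  that is maximal with \<open>\<theta> \<inter> \<nabla>\<^sub>A \<subseteq> \<psi>\<close>. It is prime: if \<open>[\<alpha>,\<beta>] \<subseteq> \<theta>\<close> with
  \<open>\<alpha>, \<beta> \<not>\<subseteq> \<theta>\<close>, then by commutativity and join-distributivity
  \<open>[\<alpha> \<or> \<theta>, \<beta> \<or> \<theta>] \<subseteq> \<theta>\<close>, while by maximality neither trace \<open>(\<alpha> \<or> \<theta>) \<inter> \<nabla>\<^sub>A\<close>,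
  \<open>(\<beta> \<or> \<theta>) \<inter> \<nabla>\<^sub>A\<close> lies in \<open>\<psi>\<close>; as the commutator of the traces in \<open>A\<close> is
  contained in the trace of the commutator in \<open>B\<close>, this contradicts primality of \<open>\<psi>\<close>.
  Finally, the intersection of a chain of primes is prime, so by Zorn's lemma
  downwards \<open>\<theta>\<close> contains a minimal prime \<open>\<mu>\<close>.\<close>

section \<open>Terms\<close>

lemma teval_closed:
  assumes "is_alg ar M"
  shows "wf_trm ar t \<Longrightarrow> (\<forall>v\<in>tvars t. e v \<in> ucarrier M) \<Longrightarrow> teval M e t \<in> ucarrier M"
proof (induction t)
  case (V x) then show ?case by simp
next
  case (F f ts)
  then have "set (map (teval M e) ts) \<subseteq> ucarrier M" "length (map (teval M e) ts) = ar f"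
    by (auto simp: list_all_iff)
  then show ?case using assms unfolding is_alg_def by simp
qed

lemma teval_subalg:
  assumes "is_subalg ar A B"
  shows "wf_trm ar t \<Longrightarrow> (\<forall>v\<in>tvars t. e v \<in> ucarrier A) \<Longrightarrow> teval A e t = teval B e t"
proof (induction t)
  case (V x) then show ?case by simp
next
  case (F f ts)
  have alg: "is_alg ar A" using assms unfolding is_subalg_def by simp
  have eq: "map (teval A e) ts = map (teval B e) ts"
    using F by (auto simp: list_all_iff)
  have "set (map (teval A e) ts) \<subseteq> ucarrier A" "length (map (teval A e) ts) = ar f"
    using F.prems by (auto simp: list_all_iff intro!: teval_closed[OF alg])
  then have "uops A f (map (teval A e) ts) = uops B f (map (teval A e) ts)"
    using assms unfolding is_subalg_def by blast
  then show ?case using eq by (metis teval.simps(2))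
qed

lemma teval_Con:
  assumes "\<theta> \<in> Con ar M"
  shows "wf_trm ar t \<Longrightarrow> (\<forall>v\<in>tvars t. (e1 v, e2 v) \<in> \<theta>) \<Longrightarrow>
    (teval M e1 t, teval M e2 t) \<in> \<theta>"
proof (induction t)
  case (V x) then show ?case by simp
next
  case (F f ts)
  let ?xs = "map (teval M e1) ts" and ?ys = "map (teval M e2) ts"
  have "(?xs ! i, ?ys ! i) \<in> \<theta>" if "i < ar f" for i
  proof -
    have "i < length ts" using that F.prems by simp
    then show ?thesis using F nth_mem by (fastforce simp: list_all_iff)
  qed
  moreover have "length ?xs = ar f" "length ?ys = ar f" using F.prems by auto
  ultimately show ?case using assms unfolding Con_def by simp
qed

section \<open>Congruences\<close>

lemma Con_compat:
  "\<theta> \<in> Con ar M \<Longrightarrow> length xs = ar f \<Longrightarrow> length ys = ar f \<Longrightarrow>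
   (\<And>i. i < ar f \<Longrightarrow> (xs ! i, ys ! i) \<in> \<theta>) \<Longrightarrow> (uops M f xs, uops M f ys) \<in> \<theta>"
  unfolding Con_def by blast

lemma Con_equiv: "\<theta> \<in> Con ar M \<Longrightarrow> equiv (ucarrier M) \<theta>"
  unfolding Con_def by blast

lemma Con_subset_nabla: "\<theta> \<in> Con ar M \<Longrightarrow> \<theta> \<subseteq> nabla M"
  unfolding Con_def nabla_def equiv_def by blast

lemma nabla_Con:
  assumes "is_alg ar M" shows "nabla M \<in> Con ar M"
proof -
  have "equiv (ucarrier M) (nabla M)"
    unfolding nabla_def equiv_def refl_on_def sym_def trans_def by blast
  moreover have "(uops M f xs, uops M f ys) \<in> nabla M"
    if "length xs = ar f" "length ys = ar f" "\<forall>i<ar f. (xs ! i, ys ! i) \<in> nabla M" for f xs ys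
  proof -
    have "set xs \<subseteq> ucarrier M" "set ys \<subseteq> ucarrier M"
      using that by (auto simp: nabla_def in_set_conv_nth)
    then show ?thesis using assms that unfolding is_alg_def nabla_def by auto
  qed
  ultimately show ?thesis unfolding Con_def by blast
qed

lemma delta_Con:
  assumes "is_alg ar M" shows "delta M \<in> Con ar M"
proof -
  have "equiv (ucarrier M) (delta M)"
    unfolding delta_def equiv_def refl_on_def sym_def trans_def by auto
  moreover have "(uops M f xs, uops M f ys) \<in> delta M"
    if "length xs = ar f" "length ys = ar f" "\<forall>i<ar f. (xs ! i, ys ! i) \<in> delta M" for f xs ys
  proof -
    have "xs = ys" using that by (intro nth_equalityI) (auto simp: delta_def)
    moreover have "set xs \<subseteq> ucarrier M"
      using that by (auto simp: delta_def in_set_conv_nth)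
    ultimately show ?thesis using assms that unfolding is_alg_def delta_def by auto
  qed
  ultimately show ?thesis unfolding Con_def by blast
qed

lemma Inter_Con:
  assumes "S \<noteq> {}" "S \<subseteq> Con ar M" shows "\<Inter>S \<in> Con ar M"
proof -
  have "equiv (ucarrier M) (\<Inter>S)"
    using assms unfolding Con_def equiv_def refl_on_def sym_def trans_def by blast
  then show ?thesis using assms unfolding Con_def by blast
qed

lemma cjoin_Con:
  assumes "is_alg ar M" "S \<subseteq> Con ar M" shows "cjoin ar M S \<in> Con ar M"
proof -
  have "nabla M \<in> {\<theta> \<in> Con ar M. \<Union>S \<subseteq> \<theta>}"
    using assms nabla_Con Con_subset_nabla by blast
  then show ?thesis unfolding cjoin_def by (intro Inter_Con) auto
qed

lemma cjoin_upper: "\<alpha> \<in> S \<Longrightarrow> \<alpha> \<subseteq> cjoin ar M S"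
  unfolding cjoin_def by blast

lemma cjoin_least: "\<theta> \<in> Con ar M \<Longrightarrow> \<Union>S \<subseteq> \<theta> \<Longrightarrow> cjoin ar M S \<subseteq> \<theta>"
  unfolding cjoin_def by blast

lemma Union_chain_Con:
  assumes "C \<noteq> {}" "subset.chain (Con ar M) C" shows "\<Union>C \<in> Con ar M"
proof -
  have CC: "C \<subseteq> Con ar M" and tot: "\<And>X Y. X \<in> C \<Longrightarrow> Y \<in> C \<Longrightarrow> X \<subseteq> Y \<or> Y \<subseteq> X"
    using assms(2) unfolding subset_chain_def by auto
  have eq: "\<And>X. X \<in> C \<Longrightarrow> equiv (ucarrier M) X" using CC Con_equiv by blast
  have "equiv (ucarrier M) (\<Union>C)"
  proof (rule equivI)
    show "\<Union>C \<subseteq> ucarrier M \<times> ucarrier M" using eq equiv_type by blast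
    show "refl_on (ucarrier M) (\<Union>C)"
      using eq assms(1) unfolding equiv_def refl_on_def by blast
    show "sym (\<Union>C)" using eq unfolding equiv_def sym_def by blast
    show "trans (\<Union>C)"
    proof (rule transI)
      fix x y z assume "(x, y) \<in> \<Union>C" "(y, z) \<in> \<Union>C"
      then obtain X Y where "X \<in> C" "(x, y) \<in> X" "Y \<in> C" "(y, z) \<in> Y" by blast
      with tot have "(x, y) \<in> X \<union> Y \<and> (y, z) \<in> X \<union> Y \<and> X \<union> Y \<in> C"
        by (metis Un_absorb1 Un_absorb2 UnI1 UnI2)
      then show "(x, z) \<in> \<Union>C" using eq unfolding equiv_def trans_def by blast
    qed
  qed
  moreover have "(uops M f xs, uops M f ys) \<in> \<Union>C"
    if "length xs = ar f" "length ys = ar f" "\<forall>i<ar f. (xs ! i, ys ! i) \<in> \<Union>C" for f xs ys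
  proof -
    have "(\<lambda>i. (xs ! i, ys ! i)) ` {..<ar f} \<subseteq> \<Union>C" using that by blast
    then obtain X where X: "X \<in> C" "(\<lambda>i. (xs ! i, ys ! i)) ` {..<ar f} \<subseteq> X"
      using finite_subset_Union_chain[OF _ _ assms] by blast
    then have "(uops M f xs, uops M f ys) \<in> X"
      using that CC by (intro Con_compat[of X]) auto
    then show ?thesis using X by blast
  qed
  ultimately show ?thesis unfolding Con_def by blast
qed

lemma restrict_Con:
  assumes sub: "is_subalg ar A B" and \<mu>: "\<mu> \<in> Con ar B"
  shows "\<mu> \<inter> nabla A \<in> Con ar A"
proof -
  have "ucarrier A \<subseteq> ucarrier B" and alg: "is_alg ar A"
    using sub unfolding is_subalg_def by auto
  then have "equiv (ucarrier A) (\<mu> \<inter> nabla A)"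
    using Con_equiv[OF \<mu>] unfolding equiv_def refl_on_def sym_def trans_def nabla_def by blast
  moreover have "(uops A f xs, uops A f ys) \<in> \<mu> \<inter> nabla A"
    if "length xs = ar f" "length ys = ar f" "\<forall>i<ar f. (xs ! i, ys ! i) \<in> \<mu> \<inter> nabla A" for f xs ys
  proof -
    have s: "set xs \<subseteq> ucarrier A" "set ys \<subseteq> ucarrier A"
      using that by (auto simp: nabla_def in_set_conv_nth)
    then have "uops A f xs = uops B f xs" "uops A f ys = uops B f ys"
      using sub that unfolding is_subalg_def by auto
    moreover have "(uops B f xs, uops B f ys) \<in> \<mu>"
      using \<mu> that by (intro Con_compat[of \<mu>]) auto
    moreover have "uops A f xs \<in> ucarrier A" "uops A f ys \<in> ucarrier A"
      using alg s that unfolding is_alg_def by auto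
    ultimately show ?thesis unfolding nabla_def by auto
  qed
  ultimately show ?thesis unfolding Con_def by blast
qed

section \<open>The commutator\<close>

lemma TC_right_self:
  fixes ar :: "'f \<Rightarrow> nat" and M :: "('f, 'a) ualg"
  assumes \<gamma>: "\<gamma> \<in> Con ar M" and \<delta>: "\<delta> \<in> Con ar M"
  shows "TC ar M \<gamma> \<delta> \<delta>"
  unfolding TC_def
proof (intro allI impI)
  fix n k :: nat and t :: "('f, nat + nat) trm" and a b c d
  assume h: "wf_trm ar t \<and> tvars t \<subseteq> Inl ` {..<n} \<union> Inr ` {..<k} \<and>
       (\<forall>i<n. (a i, b i) \<in> \<gamma>) \<and> (\<forall>j<k. (c j, d j) \<in> \<delta>)"
  have in_\<delta>: "(teval M (case_sum x c) t, teval M (case_sum x d) t) \<in> \<delta>"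
    if x: "\<forall>i<n. x i \<in> ucarrier M" for x
  proof (rule teval_Con[OF \<delta>])
    show "wf_trm ar t" using h by blast
    show "\<forall>v\<in>tvars t. (case_sum x c v, case_sum x d v) \<in> \<delta>"
    proof
      fix v assume "v \<in> tvars t"
      then consider i where "i < n" "v = Inl i" | j where "j < k" "v = Inr j" using h by blast
      then show "(case_sum x c v, case_sum x d v) \<in> \<delta>"
      proof cases
        case 1
        then show ?thesis using x Con_equiv[OF \<delta>] unfolding equiv_def refl_on_def by auto
      next
        case 2
        then show ?thesis using h by auto
      qed
    qed
  qed
  have "\<forall>i<n. a i \<in> ucarrier M" "\<forall>i<n. b i \<in> ucarrier M"
    using h equiv_type[OF Con_equiv[OF \<gamma>]] by blast+
  then show "((teval M (case_sum a c) t, teval M (case_sum a d) t) \<in> \<delta>) =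
      ((teval M (case_sum b c) t, teval M (case_sum b d) t) \<in> \<delta>)"
    using in_\<delta> by blast
qed

lemma comm_subset_right:
  assumes "\<gamma> \<in> Con ar M" "\<delta> \<in> Con ar M" shows "comm ar M \<gamma> \<delta> \<subseteq> \<delta>"
  using TC_right_self[OF assms] assms(2) unfolding comm_def by blast

lemma comm_subset_left:
  assumes "comm_commutative ar M" "\<gamma> \<in> Con ar M" "\<delta> \<in> Con ar M"
  shows "comm ar M \<gamma> \<delta> \<subseteq> \<gamma>"
  using comm_subset_right[OF assms(3,2)] assms unfolding comm_commutative_def by metis

lemma comm_join_subset:
  assumes alg: "is_alg ar M"
    and cc: "comm_commutative ar M" and jd: "comm_join_distributive ar M"
    and \<alpha>: "\<alpha> \<in> Con ar M" and \<beta>: "\<beta> \<in> Con ar M" and \<theta>: "\<theta> \<in> Con ar M"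
    and comm_\<alpha>\<beta>: "comm ar M \<alpha> \<beta> \<subseteq> \<theta>"
  shows "comm ar M (cjoin ar M {\<alpha>, \<theta>}) (cjoin ar M {\<beta>, \<theta>}) \<subseteq> \<theta>"
proof -
  let ?J\<beta> = "cjoin ar M {\<beta>, \<theta>}"
  have J\<beta>: "?J\<beta> \<in> Con ar M" using \<beta> \<theta> by (intro cjoin_Con[OF alg]) auto
  have "comm ar M ?J\<beta> \<alpha> = cjoin ar M {comm ar M \<beta> \<alpha>, comm ar M \<theta> \<alpha>}"
    using jd \<alpha> \<beta> \<theta> unfolding comm_join_distributive_def by simp
  also have "\<dots> \<subseteq> \<theta>"
    using comm_\<alpha>\<beta> cc comm_subset_left[OF cc \<theta> \<alpha>] \<alpha> \<beta>
    unfolding comm_commutative_def by (intro cjoin_least[OF \<theta>]) auto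
  finally have "comm ar M \<alpha> ?J\<beta> \<subseteq> \<theta>"
    using cc \<alpha> J\<beta> unfolding comm_commutative_def by metis
  moreover have "comm ar M (cjoin ar M {\<alpha>, \<theta>}) ?J\<beta> = cjoin ar M {comm ar M \<alpha> ?J\<beta>, comm ar M \<theta> ?J\<beta>}"
    using jd \<alpha> \<theta> J\<beta> unfolding comm_join_distributive_def by simp
  ultimately show ?thesis
    using comm_subset_left[OF cc \<theta> J\<beta>] by (auto intro!: cjoin_least[OF \<theta>])
qed

lemma TC_restrict:
  fixes ar :: "'f \<Rightarrow> nat" and A B :: "('f, 'a) ualg"
  assumes sub: "is_subalg ar A B" and tcB: "TC ar B \<alpha> \<beta> \<mu>"
  shows "TC ar A (\<alpha> \<inter> nabla A) (\<beta> \<inter> nabla A) (\<mu> \<inter> nabla A)"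
  unfolding TC_def
proof (intro allI impI)
  fix n k :: nat and t :: "('f, nat + nat) trm" and a b c d
  assume h: "wf_trm ar t \<and> tvars t \<subseteq> Inl ` {..<n} \<union> Inr ` {..<k} \<and>
       (\<forall>i<n. (a i, b i) \<in> \<alpha> \<inter> nabla A) \<and> (\<forall>j<k. (c j, d j) \<in> \<beta> \<inter> nabla A)"
  have alg: "is_alg ar A" using sub unfolding is_subalg_def by simp
  have wf: "wf_trm ar t" and tv: "tvars t \<subseteq> Inl ` {..<n} \<union> Inr ` {..<k}" using h by auto
  have iff: "((teval B (case_sum a c) t, teval B (case_sum a d) t) \<in> \<mu>) =
        ((teval B (case_sum b c) t, teval B (case_sum b d) t) \<in> \<mu>)"
    using tcB h unfolding TC_def by blast
  have ab: "a i \<in> ucarrier A" "b i \<in> ucarrier A" if "i < n" for i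
    using h that unfolding nabla_def by blast+
  have cd: "c j \<in> ucarrier A" "d j \<in> ucarrier A" if "j < k" for j
    using h that unfolding nabla_def by blast+
  have teval_A_B: "teval A (case_sum x y) t = teval B (case_sum x y) t"
    "teval A (case_sum x y) t \<in> ucarrier A"
    if "\<And>i. i < n \<Longrightarrow> x i \<in> ucarrier A" "\<And>j. j < k \<Longrightarrow> y j \<in> ucarrier A" for x y
  proof -
    have "\<forall>v\<in>tvars t. case_sum x y v \<in> ucarrier A" using tv that by auto
    then show "teval A (case_sum x y) t = teval B (case_sum x y) t"
      "teval A (case_sum x y) t \<in> ucarrier A"
      using teval_subalg[OF sub wf] teval_closed[OF alg wf] by auto
  qed
  show "((teval A (case_sum a c) t, teval A (case_sum a d) t) \<in> \<mu> \<inter> nabla A) =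
      ((teval A (case_sum b c) t, teval A (case_sum b d) t) \<in> \<mu> \<inter> nabla A)"
    using iff ab cd teval_A_B[of a c] teval_A_B[of a d] teval_A_B[of b c] teval_A_B[of b d]
    unfolding nabla_def by auto
qed

lemma comm_restrict_subset:
  assumes sub: "is_subalg ar A B"
  shows "comm ar A (\<alpha> \<inter> nabla A) (\<beta> \<inter> nabla A) \<subseteq> comm ar B \<alpha> \<beta>"
proof -
  have "\<mu> \<inter> nabla A \<in> {\<nu> \<in> Con ar A. TC ar A (\<alpha> \<inter> nabla A) (\<beta> \<inter> nabla A) \<nu>}"
    if "\<mu> \<in> Con ar B" "TC ar B \<alpha> \<beta> \<mu>" for \<mu>
    using that restrict_Con[OF sub] TC_restrict[OF sub] by blast
  then show ?thesis unfolding comm_def by blast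
qed

section \<open>Prime congruences\<close>

lemma Spec_Inter_chain:
  assumes ne: "D \<noteq> {}" and ch: "subset.chain (Spec ar M) D"
  shows "\<Inter>D \<in> Spec ar M"
proof -
  have prime: "\<And>\<phi>. \<phi> \<in> D \<Longrightarrow> prime_con ar M \<phi>"
    and tot: "\<And>X Y. X \<in> D \<Longrightarrow> Y \<in> D \<Longrightarrow> X \<subseteq> Y \<or> Y \<subseteq> X"
    using ch unfolding subset_chain_def Spec_def by auto
  then have Con: "\<And>\<phi>. \<phi> \<in> D \<Longrightarrow> \<phi> \<in> Con ar M" unfolding prime_con_def by blast
  obtain \<phi>0 where \<phi>0: "\<phi>0 \<in> D" using ne by blast
  have "\<phi>0 \<noteq> nabla M" "\<phi>0 \<subseteq> nabla M"
    using prime[OF \<phi>0] Con_subset_nabla[OF Con[OF \<phi>0]] unfolding prime_con_def by blast+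
  then have "\<Inter>D \<noteq> nabla M" using \<phi>0 by blast
  moreover have "\<alpha> \<subseteq> \<Inter>D \<or> \<beta> \<subseteq> \<Inter>D"
    if \<alpha>\<beta>: "\<alpha> \<in> Con ar M" "\<beta> \<in> Con ar M" and comm: "comm ar M \<alpha> \<beta> \<subseteq> \<Inter>D" for \<alpha> \<beta>
  proof (rule ccontr)
    assume "\<not> (\<alpha> \<subseteq> \<Inter>D \<or> \<beta> \<subseteq> \<Inter>D)"
    then obtain \<phi>1 \<phi>2 where \<phi>1: "\<phi>1 \<in> D" "\<not> \<alpha> \<subseteq> \<phi>1" and \<phi>2: "\<phi>2 \<in> D" "\<not> \<beta> \<subseteq> \<phi>2"
      by blast
    from tot[OF \<phi>1(1) \<phi>2(1)] obtain \<phi> where \<phi>: "\<phi> \<in> D" "\<not> \<alpha> \<subseteq> \<phi>" "\<not> \<beta> \<subseteq> \<phi>"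
      using \<phi>1 \<phi>2 by blast
    then have "comm ar M \<alpha> \<beta> \<subseteq> \<phi>" using comm by blast
    then show False using prime[OF \<phi>(1)] \<alpha>\<beta> \<phi>(2,3) unfolding prime_con_def by blast
  qed
  ultimately show ?thesis using Inter_Con[OF ne] Con unfolding Spec_def prime_con_def by blast
qed

lemma subset_Zorn_nonempty_dual:
  assumes "\<A> \<noteq> {}" and ch: "\<And>\<C>. \<C> \<noteq> {} \<Longrightarrow> subset.chain \<A> \<C> \<Longrightarrow> \<Inter>\<C> \<in> \<A>"
  shows "\<exists>M\<in>\<A>. \<forall>X\<in>\<A>. X \<subseteq> M \<longrightarrow> X = M"
proof -
  have "\<exists>N\<in>uminus ` \<A>. \<forall>X\<in>uminus ` \<A>. N \<subseteq> X \<longrightarrow> X = N"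
  proof (rule subset_Zorn_nonempty)
    show "uminus ` \<A> \<noteq> {}" using assms(1) by simp
    fix \<C> assume C: "\<C> \<noteq> {}" "subset.chain (uminus ` \<A>) \<C>"
    then have "\<C> \<subseteq> uminus ` \<A>" "\<forall>X\<in>\<C>. \<forall>Y\<in>\<C>. X \<subseteq> Y \<or> Y \<subseteq> X"
      unfolding subset_chain_def by auto
    then have "subset.chain \<A> (uminus ` \<C>)" unfolding subset_chain_def by auto
    with C(1) have "\<Inter>(uminus ` \<C>) \<in> \<A>" by (intro ch) simp_all
    moreover have "\<Union>\<C> = - \<Inter>(uminus ` \<C>)" by auto
    ultimately show "\<Union>\<C> \<in> uminus ` \<A>" by (metis image_eqI)
  qed
  then obtain M where M: "M \<in> \<A>" and max: "\<forall>X\<in>uminus ` \<A>. - M \<subseteq> X \<longrightarrow> X = - M"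
    by (metis (no_types, lifting) imageE)
  have "X = M" if "X \<in> \<A>" "X \<subseteq> M" for X
    using max that by simp
  then show ?thesis using M by blast
qed

lemma MinSpec_below:
  assumes \<phi>: "\<phi> \<in> Spec ar M"
  obtains \<mu> where "\<mu> \<in> MinSpec ar M" "\<mu> \<subseteq> \<phi>"
proof -
  define P where "P = {\<mu> \<in> Spec ar M. \<mu> \<subseteq> \<phi>}"
  have "\<exists>\<mu>\<in>P. \<forall>\<nu>\<in>P. \<nu> \<subseteq> \<mu> \<longrightarrow> \<nu> = \<mu>"
  proof (rule subset_Zorn_nonempty_dual)
    show "P \<noteq> {}" using \<phi> unfolding P_def by blast
    fix D assume D: "D \<noteq> {}" "subset.chain P D"
    then have "subset.chain (Spec ar M) D" unfolding subset_chain_def P_def by blast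
    with D(1) have "\<Inter>D \<in> Spec ar M" by (rule Spec_Inter_chain)
    moreover have "\<Inter>D \<subseteq> \<phi>" using D unfolding subset_chain_def P_def by blast
    ultimately show "\<Inter>D \<in> P" unfolding P_def by blast
  qed
  then obtain \<mu> where "\<mu> \<in> P" and min: "\<forall>\<nu>\<in>P. \<nu> \<subseteq> \<mu> \<longrightarrow> \<nu> = \<mu>" ..
  then have \<mu>: "\<mu> \<in> Spec ar M" "\<mu> \<subseteq> \<phi>" unfolding P_def by simp_all
  have "\<nu> = \<mu>" if "\<nu> \<in> Spec ar M" "\<nu> \<subseteq> \<mu>" for \<nu>
    using min that \<mu>(2) unfolding P_def by blast
  with \<mu>(1) have "\<mu> \<in> MinSpec ar M" unfolding MinSpec_def by blast
  then show ?thesis using \<mu>(2) by (rule that)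
qed

lemma prime_if_maximal_trace_subset:
  assumes sub: "is_subalg ar A B"
    and cc: "comm_commutative ar B" and jd: "comm_join_distributive ar B"
    and \<psi>: "\<psi> \<in> Spec ar A" and \<theta>: "\<theta> \<in> Con ar B" and \<theta>\<psi>: "\<theta> \<inter> nabla A \<subseteq> \<psi>"
    and max: "\<And>\<eta>. \<eta> \<in> Con ar B \<Longrightarrow> \<theta> \<subseteq> \<eta> \<Longrightarrow> \<eta> \<inter> nabla A \<subseteq> \<psi> \<Longrightarrow> \<eta> = \<theta>"
  shows "\<theta> \<in> Spec ar B"
proof -
  have algB: "is_alg ar B" and AB: "ucarrier A \<subseteq> ucarrier B"
    using sub unfolding is_subalg_def by auto
  have "\<psi> \<in> Con ar A" and \<psi>_prime: "\<And>\<alpha> \<beta>. \<alpha> \<in> Con ar A \<Longrightarrow> \<beta> \<in> Con ar A \<Longrightarrow>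
      comm ar A \<alpha> \<beta> \<subseteq> \<psi> \<Longrightarrow> \<alpha> \<subseteq> \<psi> \<or> \<beta> \<subseteq> \<psi>"
    and "\<psi> \<noteq> nabla A"
    using \<psi> unfolding Spec_def prime_con_def by blast+
  then have "\<not> nabla A \<subseteq> \<psi>" using Con_subset_nabla by blast
  then have "\<theta> \<noteq> nabla B" using \<theta>\<psi> AB unfolding nabla_def by auto
  moreover have "\<alpha> \<subseteq> \<theta> \<or> \<beta> \<subseteq> \<theta>"
    if \<alpha>: "\<alpha> \<in> Con ar B" and \<beta>: "\<beta> \<in> Con ar B" and comm: "comm ar B \<alpha> \<beta> \<subseteq> \<theta>" for \<alpha> \<beta>
  proof (rule ccontr)
    assume not_below: "\<not> (\<alpha> \<subseteq> \<theta> \<or> \<beta> \<subseteq> \<theta>)"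
    have trace: "cjoin ar B {\<gamma>, \<theta>} \<inter> nabla A \<in> Con ar A \<and> \<not> cjoin ar B {\<gamma>, \<theta>} \<inter> nabla A \<subseteq> \<psi>"
      if \<gamma>: "\<gamma> \<in> Con ar B" "\<not> \<gamma> \<subseteq> \<theta>" for \<gamma>
    proof
      have J: "cjoin ar B {\<gamma>, \<theta>} \<in> Con ar B" using \<gamma> \<theta> by (intro cjoin_Con[OF algB]) auto
      then show "cjoin ar B {\<gamma>, \<theta>} \<inter> nabla A \<in> Con ar A" by (rule restrict_Con[OF sub])
      have "\<gamma> \<subseteq> cjoin ar B {\<gamma>, \<theta>}" "\<theta> \<subseteq> cjoin ar B {\<gamma>, \<theta>}" by (simp_all add: cjoin_upper)
      then show "\<not> cjoin ar B {\<gamma>, \<theta>} \<inter> nabla A \<subseteq> \<psi>" using max[OF J] \<gamma>(2) by blast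
    qed
    let ?J\<alpha> = "cjoin ar B {\<alpha>, \<theta>}" and ?J\<beta> = "cjoin ar B {\<beta>, \<theta>}"
    have T\<alpha>: "?J\<alpha> \<inter> nabla A \<in> Con ar A" "\<not> ?J\<alpha> \<inter> nabla A \<subseteq> \<psi>"
      and T\<beta>: "?J\<beta> \<inter> nabla A \<in> Con ar A" "\<not> ?J\<beta> \<inter> nabla A \<subseteq> \<psi>"
      using trace[OF \<alpha>] trace[OF \<beta>] not_below by blast+
    have "comm ar A (?J\<alpha> \<inter> nabla A) (?J\<beta> \<inter> nabla A) \<subseteq> comm ar B ?J\<alpha> ?J\<beta>"
      by (rule comm_restrict_subset[OF sub])
    moreover have "comm ar A (?J\<alpha> \<inter> nabla A) (?J\<beta> \<inter> nabla A) \<subseteq> nabla A"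
      using comm_subset_right[OF T\<alpha>(1) T\<beta>(1)] Con_subset_nabla[OF T\<beta>(1)] by blast
    moreover have "comm ar B ?J\<alpha> ?J\<beta> \<subseteq> \<theta>"
      by (rule comm_join_subset[OF algB cc jd \<alpha> \<beta> \<theta> comm])
    ultimately have "comm ar A (?J\<alpha> \<inter> nabla A) (?J\<beta> \<inter> nabla A) \<subseteq> \<psi>"
      using \<theta>\<psi> by blast
    then show False using \<psi>_prime[OF T\<alpha>(1) T\<beta>(1)] T\<alpha>(2) T\<beta>(2) by blast
  qed
  ultimately show ?thesis using \<theta> unfolding Spec_def prime_con_def by blast
qed

lemma Spec_trace_below:
  assumes sub: "is_subalg ar A B"
    and cc: "comm_commutative ar B" and jd: "comm_join_distributive ar B"
    and \<psi>: "\<psi> \<in> Spec ar A"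
  obtains \<phi> where "\<phi> \<in> Spec ar B" "\<phi> \<inter> nabla A \<subseteq> \<psi>"
proof -
  define F where "F = {\<theta> \<in> Con ar B. \<theta> \<inter> nabla A \<subseteq> \<psi>}"
  have "\<exists>\<theta>\<in>F. \<forall>\<eta>\<in>F. \<theta> \<subseteq> \<eta> \<longrightarrow> \<eta> = \<theta>"
  proof (rule subset_Zorn_nonempty)
    have "is_alg ar B" using sub unfolding is_subalg_def by simp
    moreover have "\<psi> \<in> Con ar A" using \<psi> unfolding Spec_def prime_con_def by blast
    then have "delta B \<inter> nabla A \<subseteq> \<psi>"
      using Con_equiv[of \<psi>] unfolding delta_def nabla_def equiv_def refl_on_def by auto
    ultimately show "F \<noteq> {}" using delta_Con[of ar B] unfolding F_def by blast
  next
    fix C assume C: "C \<noteq> {}" "subset.chain F C"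
    then have "subset.chain (Con ar B) C" unfolding subset_chain_def F_def by blast
    with C(1) have "\<Union>C \<in> Con ar B" by (rule Union_chain_Con)
    moreover have "\<Union>C \<inter> nabla A \<subseteq> \<psi>" using C(2) unfolding subset_chain_def F_def by blast
    ultimately show "\<Union>C \<in> F" unfolding F_def by blast
  qed
  then obtain \<theta> where "\<theta> \<in> F" and max_F: "\<forall>\<eta>\<in>F. \<theta> \<subseteq> \<eta> \<longrightarrow> \<eta> = \<theta>" ..
  then have \<theta>: "\<theta> \<in> Con ar B" "\<theta> \<inter> nabla A \<subseteq> \<psi>" unfolding F_def by simp_all
  have max: "\<eta> = \<theta>" if "\<eta> \<in> Con ar B" "\<theta> \<subseteq> \<eta>" "\<eta> \<inter> nabla A \<subseteq> \<psi>" for \<eta>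
    using max_F that unfolding F_def by blast
  show ?thesis by (rule that[OF prime_if_maximal_trace_subset[OF sub cc jd \<psi> \<theta> max] \<theta>(2)])
qed

theorem mainTheorem13:
  fixes ar :: "'f \<Rightarrow> nat" and A B :: "('f, 'a) ualg"
  assumes "is_subalg ar A B"
    and "semiprime ar A" and "semiprime ar B"
    and "comm_commutative ar A" and "comm_commutative ar B"
    and "comm_join_distributive ar A" and "comm_join_distributive ar B"
    and "admissible ar A B"
  shows "\<forall>\<psi>\<in>Spec ar A. \<exists>\<mu>\<in>MinSpec ar B. \<mu> \<inter> nabla A \<subseteq> \<psi>"
proof
  fix \<psi> assume "\<psi> \<in> Spec ar A"
  then obtain \<phi> where "\<phi> \<in> Spec ar B" "\<phi> \<inter> nabla A \<subseteq> \<psi>"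
    using Spec_trace_below[OF assms(1,5,7)] by blast
  moreover obtain \<mu> where "\<mu> \<in> MinSpec ar B" "\<mu> \<subseteq> \<phi>"
    using MinSpec_below[OF \<open>\<phi> \<in> Spec ar B\<close>] by blast
  ultimately show "\<exists>\<mu>\<in>MinSpec ar B. \<mu> \<inter> nabla A \<subseteq> \<psi>" by blast
qed

end
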